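(* Let $\alpha>0$ and let $(\omega_k)_{k\ge0}$ be the sequence defined below, satisfying the tie-breaking convention. Suppose there is $n\in\mathbb{N}$ such that $y(\omega_k)=y(\omega)$ for all $k<n$ and $y(\omega_n)\neq y(\omega)$. Then $f(y(\omega_n))<f(y(\omega))$.
   Context: Let $Y\subset\mathbb{R}^n$ be a finite non-empty set. For $\omega\in\mathbb{R}^n$, $y(\omega)$ denotes a chosen element of $\operatorname{argmin}_{y\in Y}\langle \omega,y\rangle$. Let $\ell:\mathbb{R}^n\to\mathbb{R}$ be differentiable and write $g(y)=\nabla \ell(y)$. Given $\omega\in\mathbb{R}^n$ and $\alpha>0$, define $\omega_0=\omega$ and $\omega_{k+1}=\omega_k+\alpha\, g(y(\omega_k))$ for $k\ge 0$. Tie-breaking convention: for every $k\ge1$, if $y(\omega_{k-1})$ is a minimizer of $\langle \omega_k,\cdot\rangle$ over $Y$, then $y(\omega_k)=y(\omega_{k-1})$. Define the linearized loss $f(y')=\ell(y(\omega))+\langle y'-y(\omega),\, g(y(\omega))\rangle$ for $y'\in Y$. *)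

theory Defs
  imports "HOL-Analysis.Analysis"
begin

definition argminY :: "(real^'n) set \<Rightarrow> real^'n \<Rightarrow> (real^'n) set" where
  "argminY Y w = {y \<in> Y. \<forall>y'\<in>Y. w \<bullet> y \<le> w \<bullet> y'}"

fun omega_seq :: "(real^'n \<Rightarrow> real^'n) \<Rightarrow> (real^'n \<Rightarrow> real^'n) \<Rightarrow> real \<Rightarrow> real^'n \<Rightarrow> nat \<Rightarrow> real^'n" where
  "omega_seq ysel g \<alpha> w 0 = w"
| "omega_seq ysel g \<alpha> w (Suc k) =
     omega_seq ysel g \<alpha> w k + \<alpha> *\<^sub>R g (ysel (omega_seq ysel g \<alpha> w k))"

definition lin_loss :: "(real^'n \<Rightarrow> real) \<Rightarrow> (real^'n \<Rightarrow> real^'n) \<Rightarrow> (real^'n \<Rightarrow> real^'n) \<Rightarrow> real^'n \<Rightarrow> real^'n \<Rightarrow> real" where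
  "lin_loss l g ysel w y' = l (ysel w) + (y' - ysel w) \<bullet> g (ysel w)"

end

theory Submission
  imports Defs
begin

text \<open>The last step of the iteration before the selection changes moves the weights by
  \<open>\<alpha> g(y(\<omega>))\<close>. The old selection \<open>y(\<omega>)\<close> was a minimiser before that step but, by the
  tie-breaking rule, is not one afterwards, while the new selection \<open>y(\<omega>\<^sub>N)\<close> is. Comparing
  the two minimality statements cancels the old weights and leaves
  \<open>\<langle>g(y(\<omega>)), y(\<omega>\<^sub>N)\<rangle> < \<langle>g(y(\<omega>)), y(\<omega>)\<rangle>\<close>, which is exactly the decrease of the
  linearised loss.\<close>

lemma argminY_shift_inner_less:
  assumes y0: "y0 \<in> argminY Y v"
    and y1: "y1 \<in> argminY Y (v + a *\<^sub>R d)"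
    and not_min: "y0 \<notin> argminY Y (v + a *\<^sub>R d)"
    and a_pos: "a > 0"
  shows "d \<bullet> y1 < d \<bullet> y0"
proof -
  have y0Y: "y0 \<in> Y" and y0_le: "v \<bullet> y0 \<le> v \<bullet> y1"
    using y0 y1 by (auto simp: argminY_def)
  obtain y' where "y' \<in> Y" "(v + a *\<^sub>R d) \<bullet> y' < (v + a *\<^sub>R d) \<bullet> y0"
    using not_min y0Y by (auto simp: argminY_def not_le)
  then have "(v + a *\<^sub>R d) \<bullet> y1 < (v + a *\<^sub>R d) \<bullet> y0"
    using y1 by (force simp: argminY_def)
  with y0_le have "a * (d \<bullet> y1) < a * (d \<bullet> y0)"
    by (simp add: inner_add_left)
  with a_pos show ?thesis by simp
qed

lemma lin_loss_less_iff:
  "lin_loss l g ysel w y' < lin_loss l g ysel w (ysel w) \<longleftrightarrow>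
     g (ysel w) \<bullet> y' < g (ysel w) \<bullet> ysel w"
  by (simp add: lin_loss_def inner_diff_right inner_commute)

theorem mainTheorem4:
  fixes Y :: "(real^'n) set"
    and ysel :: "real^'n \<Rightarrow> real^'n"
    and l :: "real^'n \<Rightarrow> real"
    and g :: "real^'n \<Rightarrow> real^'n"
    and w :: "real^'n"
    and \<alpha> :: real
    and N :: nat
  assumes finY: "finite Y" and neY: "Y \<noteq> {}"
    and ysel: "\<And>v. ysel v \<in> argminY Y v"
    and grad: "\<And>x. GDERIV l x :> g x"
    and alpha_pos: "\<alpha> > 0"
    and tie: "\<And>k. ysel (omega_seq ysel g \<alpha> w k) \<in> argminY Y (omega_seq ysel g \<alpha> w (Suc k))
                 \<Longrightarrow> ysel (omega_seq ysel g \<alpha> w (Suc k)) = ysel (omega_seq ysel g \<alpha> w k)"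
    and same: "\<And>k. k < N \<Longrightarrow> ysel (omega_seq ysel g \<alpha> w k) = ysel w"
    and diff: "ysel (omega_seq ysel g \<alpha> w N) \<noteq> ysel w"
  shows "lin_loss l g ysel w (ysel (omega_seq ysel g \<alpha> w N)) < lin_loss l g ysel w (ysel w)"
proof -
  define \<omega> where "\<omega> = omega_seq ysel g \<alpha> w"
  obtain M where N: "N = Suc M"
    using diff by (cases N) auto
  have sel_M: "ysel (\<omega> M) = ysel w"
    using same[of M] N by (simp add: \<omega>_def)
  have step: "\<omega> N = \<omega> M + \<alpha> *\<^sub>R g (ysel w)"
    using sel_M N by (simp add: \<omega>_def)
  have "ysel w \<notin> argminY Y (\<omega> N)"
    using tie[of M] sel_M diff N by (auto simp: \<omega>_def)
  then have "g (ysel w) \<bullet> ysel (\<omega> N) < g (ysel w) \<bullet> ysel w"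
    using argminY_shift_inner_less[OF _ _ _ alpha_pos] ysel[of "\<omega> M"] ysel[of "\<omega> N"]
    by (simp add: step sel_M)
  then show ?thesis
    by (simp add: lin_loss_less_iff \<omega>_def)
qed

end
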